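(* Let $G\le\mathrm{O}(d)$ be finite, $z_1,\ldots,z_n\in\mathbb{R}^d$, $x\in\bigcap_{i=1}^nQ_{z_i}$, and $y\in\mathbb{R}^d$. Then: (a) for every $i\in\{1,\ldots,n\}$, the set $\arg\max_{p\in[z_i]}\langle p,x\rangle$ consists of a single element, denoted $v_i(x)$; (b) the set $\mathcal{F}(x,y)$ of functions $f:\{1,\ldots,n\}\to[y]$ satisfying $f(i)\in S(x,y)\cap\arg\max_{q\in[y]}\langle q,v_i(x)\rangle$ for all $i$ is nonempty.
   Context: For $x\in\mathbb{R}^d$, $[x]:=\{gx:g\in G\}$. The open Voronoi cell $V_x$ is the set of $y\in\mathbb{R}^d$ such that $x$ is the unique maximizer of $\langle p,y\rangle$ over $p\in[x]$; $Q_x:=\bigcup_{p\in[x]}V_p$. For $x,y\in\mathbb{R}^d$, $S(x,y):=\{q\in[y]:V_q\cap V_x\ne\varnothing\}$. *)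

theory Defs
  imports "HOL-Analysis.Analysis"
begin

definition finite_orth_group :: "(real^'d^'d) set \<Rightarrow> bool" where
  "finite_orth_group G \<longleftrightarrow> finite G \<and> (\<forall>g\<in>G. orthogonal_matrix g) \<and> mat 1 \<in> G
     \<and> (\<forall>g\<in>G. \<forall>h\<in>G. g ** h \<in> G) \<and> (\<forall>g\<in>G. matrix_inv g \<in> G)"

definition orbit :: "(real^'d^'d) set \<Rightarrow> real^'d \<Rightarrow> (real^'d) set" where
  "orbit G x = {g *v x | g. g \<in> G}"

definition voronoi :: "(real^'d^'d) set \<Rightarrow> real^'d \<Rightarrow> (real^'d) set" where
  "voronoi G x = {y. (\<forall>p\<in>orbit G x. p \<noteq> x \<longrightarrow> inner p y < inner x y)}"

definition Qcell :: "(real^'d^'d) set \<Rightarrow> real^'d \<Rightarrow> (real^'d) set" where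
  "Qcell G x = (\<Union>p\<in>orbit G x. voronoi G p)"

definition Sset :: "(real^'d^'d) set \<Rightarrow> real^'d \<Rightarrow> real^'d \<Rightarrow> (real^'d) set" where
  "Sset G x y = {q \<in> orbit G y. voronoi G q \<inter> voronoi G x \<noteq> {}}"

definition argmax_inner :: "(real^'d) set \<Rightarrow> real^'d \<Rightarrow> (real^'d) set" where
  "argmax_inner A w = {p \<in> A. \<forall>p'\<in>A. inner p' w \<le> inner p w}"

end

theory Submission
  imports Defs
begin

text \<open>Part (a): \<open>x \<in> V\<^sub>p\<close> for some \<open>p \<in> [z\<^sub>i]\<close> says that \<open>p\<close> is the unique maximiser of
  \<open>\<langle>-, x\<rangle>\<close> on \<open>[p] = [z\<^sub>i]\<close>. Part (b): given \<open>x \<in> V\<^sub>v\<close>, pick \<open>q \<in> [y]\<close> maximising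
  \<open>\<langle>q, v\<rangle>\<close>, ties broken by maximising \<open>\<langle>q, x\<rangle>\<close>. For small \<open>t > 0\<close> the point
  \<open>u = v + t x + t\<^sup>2 q\<close> lies in \<open>V\<^sub>q\<close>, because on \<open>[y]\<close> the functionals \<open>\<langle>-, v\<rangle>\<close>, \<open>\<langle>-, x\<rangle>\<close>,
  \<open>\<langle>-, q\<rangle>\<close> are compared lexicographically and the last one is strictly maximised at \<open>q\<close>
  since \<open>[y]\<close> lies on a sphere. It also lies in \<open>V\<^sub>x\<close>: \<open>\<langle>g x, v\<rangle> = \<langle>x, g\<inverse> v\<rangle> \<le> \<langle>x, v\<rangle>\<close>
  as \<open>x \<in> V\<^sub>v\<close>, and \<open>\<langle>g x, x\<rangle> < \<langle>x, x\<rangle>\<close> for \<open>g x \<noteq> x\<close>. Hence \<open>q \<in> S(x, y)\<close>.\<close>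

lemma inner_matrix_vector_transpose:
  fixes g :: "real^'d^'d"
  shows "inner (g *v a) b = inner a (transpose g *v b)"
  by (metis dot_lmul_matrix inner_commute transpose_matrix_vector)

lemma orthogonal_matrix_inner:
  fixes g :: "real^'d^'d"
  assumes "orthogonal_matrix g"
  shows "inner (g *v a) (g *v b) = inner a b"
  using assms
  by (simp add: inner_matrix_vector_transpose matrix_vector_mul_assoc orthogonal_matrix_def)

lemma orthogonal_matrix_inv_eq_transpose:
  fixes g :: "real^'d^'d"
  assumes "orthogonal_matrix g"
  shows "matrix_inv g = transpose g"
proof -
  let ?M = "matrix_inv g"
  have g_transpose: "g ** transpose g = mat 1 \<and> transpose g ** g = mat 1"
    using assms by (simp add: orthogonal_matrix_def)
  then have M_inverse: "g ** ?M = mat 1 \<and> ?M ** g = mat 1"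
    unfolding matrix_inv_def by (rule someI)
  have "?M = ?M ** (g ** transpose g)"
    using g_transpose by simp
  also have "\<dots> = (?M ** g) ** transpose g"
    by (simp add: matrix_mul_assoc)
  finally show ?thesis
    using M_inverse by simp
qed

lemma finite_orth_group_orthogonal:
  "finite_orth_group G \<Longrightarrow> g \<in> G \<Longrightarrow> orthogonal_matrix g"
  unfolding finite_orth_group_def by blast

lemma finite_orth_group_transpose:
  assumes "finite_orth_group G" "g \<in> G"
  shows "transpose g \<in> G"
  using assms orthogonal_matrix_inv_eq_transpose[OF finite_orth_group_orthogonal[OF assms]]
  unfolding finite_orth_group_def by metis

lemma orbit_self:
  "finite_orth_group G \<Longrightarrow> z \<in> orbit G z"
  unfolding finite_orth_group_def orbit_def by (metis (mono_tags) matrix_vector_mul_lid mem_Collect_eq)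

lemma finite_orbit:
  "finite_orth_group G \<Longrightarrow> finite (orbit G z)"
  unfolding finite_orth_group_def orbit_def by (simp add: setcompr_eq_image)

lemma orbit_subset:
  assumes "finite_orth_group G" "p \<in> orbit G z"
  shows "orbit G p \<subseteq> orbit G z"
  using assms unfolding orbit_def finite_orth_group_def
  by (auto simp: matrix_vector_mul_assoc)

lemma orbit_sym:
  assumes G: "finite_orth_group G" and "p \<in> orbit G z"
  shows "z \<in> orbit G p"
proof -
  obtain g where "g \<in> G" "p = g *v z"
    using assms(2) unfolding orbit_def by auto
  then have "transpose g \<in> G" "z = transpose g *v p"
    using finite_orth_group_transpose[OF G] finite_orth_group_orthogonal[OF G]
    by (auto simp: matrix_vector_mul_assoc orthogonal_matrix_def)
  then show ?thesis
    unfolding orbit_def by blast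
qed

lemma orbit_eq:
  "finite_orth_group G \<Longrightarrow> p \<in> orbit G z \<Longrightarrow> orbit G p = orbit G z"
  by (meson orbit_subset orbit_sym subset_antisym)

lemma inner_self_orbit:
  "finite_orth_group G \<Longrightarrow> p \<in> orbit G z \<Longrightarrow> inner p p = inner z z"
  unfolding orbit_def by (auto simp: orthogonal_matrix_inner finite_orth_group_orthogonal)

lemma inner_less_inner_self:
  fixes p q :: "'a::real_inner"
  assumes "inner p p = inner q q" "p \<noteq> q"
  shows "inner p q < inner q q"
proof -
  have "0 < inner (p - q) (p - q)"
    using assms(2) by simp
  also have "inner (p - q) (p - q) = inner p p - 2 * inner p q + inner q q"
    by (simp add: inner_diff inner_commute)
  finally show ?thesis
    using assms(1) by simp
qed

lemma inner_orbit_le_if_voronoi: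
  assumes G: "finite_orth_group G" and "x \<in> voronoi G v" "p \<in> orbit G x"
  shows "inner p v \<le> inner x v"
proof -
  obtain g where g: "g \<in> G" "p = g *v x"
    using assms(3) unfolding orbit_def by auto
  have "transpose g *v v \<in> orbit G v"
    using finite_orth_group_transpose[OF G g(1)] unfolding orbit_def by blast
  then have "inner (transpose g *v v) x \<le> inner v x"
    using assms(2) unfolding voronoi_def by (cases "transpose g *v v = v") auto
  moreover have "inner p v = inner (transpose g *v v) x"
    using g(2) inner_matrix_vector_transpose inner_commute by metis
  ultimately show ?thesis
    by (simp add: inner_commute)
qed

lemma argmax_inner_subset: "argmax_inner A w \<subseteq> A"
  unfolding argmax_inner_def by blast

lemma argmax_inner_nonempty:
  assumes "finite A" "A \<noteq> {}"
  shows "argmax_inner A w \<noteq> {}"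
proof -
  obtain q where q: "q \<in> A" "Max ((\<lambda>p. inner p w) ` A) = inner q w"
    using obtains_MAX[OF assms] by metis
  have "inner p w \<le> inner q w" if "p \<in> A" for p
    using assms(1) that q(2)[symmetric] by simp
  then have "q \<in> argmax_inner A w"
    using q(1) unfolding argmax_inner_def by blast
  then show ?thesis
    by blast
qed

lemma argmax_inner_eq_singleton_if_voronoi:
  assumes "finite_orth_group G" "p \<in> orbit G z" "x \<in> voronoi G p"
  shows "argmax_inner (orbit G z) x = {p}"
proof -
  have "inner q x < inner p x" if "q \<in> orbit G z" "q \<noteq> p" for q
    using assms that orbit_eq[OF assms(1,2)] unfolding voronoi_def by auto
  then show ?thesis
    using assms(2) unfolding argmax_inner_def by (force intro: less_imp_le)
qed

lemma eventually_lex_neg_quadratic_at_right: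
  fixes a b c :: real
  assumes "a < 0 \<or> a = 0 \<and> (b < 0 \<or> b = 0 \<and> c < 0)"
  shows "\<forall>\<^sub>F t in at_right 0. a + t * b + t\<^sup>2 * c < 0"
proof -
  have pos: "\<forall>\<^sub>F t in at_right (0::real). t > 0"
    by (simp add: eventually_at_right_less)
  consider "a < 0" | "a = 0" "b < 0" | "a = 0" "b = 0" "c < 0"
    using assms by blast
  then show ?thesis
  proof cases
    case 1
    have "((\<lambda>t::real. a + t * b + t\<^sup>2 * c) \<longlongrightarrow> a + 0 * b + 0\<^sup>2 * c) (at_right 0)"
      by (intro tendsto_intros)
    then show ?thesis
      using 1 by (simp add: order_tendstoD(2))
  next
    case 2
    have "((\<lambda>t::real. b + t * c) \<longlongrightarrow> b + 0 * c) (at_right 0)"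
      by (intro tendsto_intros)
    then have "\<forall>\<^sub>F t in at_right 0. b + t * c < 0"
      using 2 by (simp add: order_tendstoD(2))
    with pos show ?thesis
    proof eventually_elim
      case (elim t)
      then have "t * (b + t * c) < 0"
        by (simp add: mult_pos_neg)
      then show ?case
        using 2 by (simp add: algebra_simps power2_eq_square)
    qed
  next
    case 3
    from pos show ?thesis
      by eventually_elim (use 3 in \<open>simp add: mult_pos_neg\<close>)
  qed
qed

lemma eventually_strict_max_perturbed:
  fixes A :: "'a::real_inner set"
  assumes "finite A"
    and lex: "\<And>q. q \<in> A \<Longrightarrow> q \<noteq> a \<Longrightarrow> inner (q - a) v < 0 \<or> inner (q - a) v = 0
      \<and> (inner (q - a) x < 0 \<or> inner (q - a) x = 0 \<and> inner (q - a) w < 0)"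
  shows "\<forall>\<^sub>F t in at_right 0. \<forall>q\<in>A. q \<noteq> a \<longrightarrow>
    inner q (v + t *\<^sub>R x + t\<^sup>2 *\<^sub>R w) < inner a (v + t *\<^sub>R x + t\<^sup>2 *\<^sub>R w)"
proof (rule eventually_ball_finite[OF assms(1)], intro ballI)
  fix q assume "q \<in> A"
  show "\<forall>\<^sub>F t in at_right 0. q \<noteq> a \<longrightarrow>
    inner q (v + t *\<^sub>R x + t\<^sup>2 *\<^sub>R w) < inner a (v + t *\<^sub>R x + t\<^sup>2 *\<^sub>R w)"
  proof (cases "q = a")
    case False
    then have "\<forall>\<^sub>F t in at_right 0. inner (q - a) v + t * inner (q - a) x + t\<^sup>2 * inner (q - a) w < 0"
      using lex[OF \<open>q \<in> A\<close>] by (intro eventually_lex_neg_quadratic_at_right) blast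
    then show ?thesis
      by eventually_elim (simp add: inner_diff_left inner_add_right algebra_simps)
  qed simp
qed

lemma Sset_inter_argmax_inner_nonempty:
  assumes G: "finite_orth_group G" and x: "x \<in> voronoi G v"
  shows "Sset G x y \<inter> argmax_inner (orbit G y) v \<noteq> {}"
proof -
  let ?M = "argmax_inner (orbit G y) v"
  have "?M \<noteq> {}"
    using argmax_inner_nonempty finite_orbit[OF G] orbit_self[OF G] by blast
  moreover have "finite ?M"
    using argmax_inner_subset finite_orbit[OF G] by (rule finite_subset)
  ultimately obtain q where q: "q \<in> argmax_inner ?M x"
    using argmax_inner_nonempty by blast
  then have qM: "q \<in> ?M" and qy: "q \<in> orbit G y"
    using argmax_inner_subset by blast+
  define u where "u t = v + t *\<^sub>R x + t\<^sup>2 *\<^sub>R q" for t :: real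
  have "\<forall>\<^sub>F t in at_right 0. \<forall>p\<in>orbit G y. p \<noteq> q \<longrightarrow> inner p (u t) < inner q (u t)"
    unfolding u_def
  proof (rule eventually_strict_max_perturbed[OF finite_orbit[OF G]])
    fix p assume p: "p \<in> orbit G y" "p \<noteq> q"
    have "inner p v \<le> inner q v" "inner p v = inner q v \<Longrightarrow> inner p x \<le> inner q x"
      using p(1) qM q unfolding argmax_inner_def by auto
    moreover have "inner p q < inner q q"
      using inner_less_inner_self p inner_self_orbit[OF G] qy by metis
    ultimately show "inner (p - q) v < 0 \<or> inner (p - q) v = 0
      \<and> (inner (p - q) x < 0 \<or> inner (p - q) x = 0 \<and> inner (p - q) q < 0)"
      by (auto simp: inner_diff_left)
  qed
  moreover have "\<forall>\<^sub>F t in at_right 0. \<forall>p\<in>orbit G x. p \<noteq> x \<longrightarrow> inner p (u t) < inner x (u t)"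
    unfolding u_def
  proof (rule eventually_strict_max_perturbed[OF finite_orbit[OF G]])
    fix p assume p: "p \<in> orbit G x" "p \<noteq> x"
    have "inner p v \<le> inner x v"
      using inner_orbit_le_if_voronoi[OF G x p(1)] .
    moreover have "inner p x < inner x x"
      using inner_less_inner_self p inner_self_orbit[OF G] by metis
    ultimately show "inner (p - x) v < 0 \<or> inner (p - x) v = 0
      \<and> (inner (p - x) x < 0 \<or> inner (p - x) x = 0 \<and> inner (p - x) q < 0)"
      by (auto simp: inner_diff_left)
  qed
  ultimately obtain t where
      "\<forall>p\<in>orbit G y. p \<noteq> q \<longrightarrow> inner p (u t) < inner q (u t)"
      "\<forall>p\<in>orbit G x. p \<noteq> x \<longrightarrow> inner p (u t) < inner x (u t)"
    using eventually_happens'[OF trivial_limit_at_right_real eventually_conj] by blast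
  then have "u t \<in> voronoi G q" "u t \<in> voronoi G x"
    unfolding voronoi_def orbit_eq[OF G qy] by blast+
  then have "q \<in> Sset G x y"
    using qy unfolding Sset_def by blast
  then show ?thesis
    using qM by blast
qed

theorem corollary19:
  fixes G :: "(real^'d^'d) set" and z :: "nat \<Rightarrow> real^'d" and n :: nat
    and x y :: "real^'d"
  assumes "finite_orth_group G"
    and "x \<in> (\<Inter>i\<in>{1..n}. Qcell G (z i))"
  shows "(\<forall>i\<in>{1..n}. \<exists>!p. p \<in> argmax_inner (orbit G (z i)) x)
     \<and> (\<exists>f \<in> {1..n} \<rightarrow>\<^sub>E orbit G y. \<forall>i\<in>{1..n}.
          f i \<in> Sset G x y \<inter>
                argmax_inner (orbit G y) (THE p. p \<in> argmax_inner (orbit G (z i)) x))"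
proof -
  have "\<forall>i\<in>{1..n}. \<exists>p. p \<in> orbit G (z i) \<and> x \<in> voronoi G p"
    using assms(2) unfolding Qcell_def by blast
  then obtain v where v: "\<And>i. i \<in> {1..n} \<Longrightarrow> v i \<in> orbit G (z i) \<and> x \<in> voronoi G (v i)"
    by metis
  have argmax: "argmax_inner (orbit G (z i)) x = {v i}" if "i \<in> {1..n}" for i
    using argmax_inner_eq_singleton_if_voronoi[OF assms(1)] v[OF that] by blast
  then have unique: "\<forall>i\<in>{1..n}. \<exists>!p. p \<in> argmax_inner (orbit G (z i)) x"
    by simp
  have THE_argmax: "(THE p. p \<in> argmax_inner (orbit G (z i)) x) = v i" if "i \<in> {1..n}" for i
    using argmax[OF that] by simp
  have "\<exists>q. q \<in> Sset G x y \<inter> argmax_inner (orbit G y) (v i)" if "i \<in> {1..n}" for i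
    using Sset_inter_argmax_inner_nonempty[OF assms(1) conjunct2[OF v[OF that]]] by blast
  then obtain f where f: "\<And>i. i \<in> {1..n} \<Longrightarrow> f i \<in> Sset G x y \<inter> argmax_inner (orbit G y) (v i)"
    by metis
  have "restrict f {1..n} \<in> {1..n} \<rightarrow>\<^sub>E orbit G y"
    using f unfolding Sset_def by auto
  moreover have "\<forall>i\<in>{1..n}. restrict f {1..n} i \<in> Sset G x y \<inter>
      argmax_inner (orbit G y) (THE p. p \<in> argmax_inner (orbit G (z i)) x)"
    using f THE_argmax by simp
  ultimately show ?thesis
    using unique by blast
qed

end
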